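(* Let $\nu\in\mathcal P_{2,0}(\mathbb R^d)$ and let $\mathcal D\subset\mathcal P_2(\mathbb R^d)$ be a cone. For every $\mu^*\in\operatorname{argmax}_{\mu\in\mathcal D\cap\mathcal M^K_\nu}\operatorname{Var}(\mu)$ and every $\pi^*\in\operatorname{argmax}_{\pi\in\Pi(\mu^*,\nu)}\int\langle x,y\rangle\,d\pi(x,y)$, $$\int\langle x,y\rangle\,d\pi^*(x,y)=\int|x|^2\,d\mu^*(x).$$ If in addition $\mathcal D$ is translation invariant, then every such $\mu^*$ satisfies $\int x\,d\mu^*(x)=0$.
   Context: $\mathcal P_2(\mathbb R^d)$: Borel probability measures with finite second moment; $\mathcal P_{2,0}$: those with zero mean. $\Pi(\mu,\nu)$: couplings. $\operatorname{Var}(\mu)=\int|x-\int z\,d\mu|^2d\mu$. Kantorovich dominance: $\mu\preceq_K\nu$ iff there is $\pi\in\Pi(\mu,\nu)$ with $\int\langle x-b_\nu,y-x\rangle\,d\pi=0$, $b_\nu=\int y\,d\nu$; $\mathcal M^K_\nu=\{\mu\in\mathcal P_2(\mathbb R^d):\mu\preceq_K\nu\}$. The dilation $\lambda_\#\mu$ is the law of $\lambda X$, $X\sim\mu$. $\mathcal D$ is a cone if $\lambda_\#\mu\in\mathcal D$ for all $\mu\in\mathcal D$, $\lambda\ge0$; translation invariant if $(T_k)_\#\mu\in\mathcal D$ for all $\mu\in\mathcal D$, $k\in\mathbb R^d$, where $T_k(x)=x+k$. *)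

theory Defs
  imports "HOL-Probability.Probability"
begin

definition P2 :: "('a::euclidean_space) measure set" where
  "P2 = {M. sets M = sets borel \<and> prob_space M \<and> integrable M (\<lambda>x. norm x ^ 2)}"

definition mean :: "('a::euclidean_space) measure \<Rightarrow> 'a" where
  "mean M = (\<integral>x. x \<partial>M)"

definition P20 :: "('a::euclidean_space) measure set" where
  "P20 = {M \<in> P2. mean M = 0}"

definition Var :: "('a::euclidean_space) measure \<Rightarrow> real" where
  "Var M = (\<integral>x. (norm (x - mean M))^2 \<partial>M)"

definition couplings :: "('a::euclidean_space) measure \<Rightarrow> 'a measure \<Rightarrow> ('a \<times> 'a) measure set" where
  "couplings \<mu> \<nu> = {\<pi>. sets \<pi> = sets borel \<and> prob_space \<pi> \<and>
      distr \<pi> borel fst = \<mu> \<and> distr \<pi> borel snd = \<nu>}"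

definition kantorovich_dom :: "('a::euclidean_space) measure \<Rightarrow> 'a measure \<Rightarrow> bool" where
  "kantorovich_dom \<mu> \<nu> \<longleftrightarrow> (\<exists>\<pi>\<in>couplings \<mu> \<nu>.
      (\<integral>p. inner (fst p - mean \<nu>) (snd p - fst p) \<partial>\<pi>) = 0)"

definition MK :: "('a::euclidean_space) measure \<Rightarrow> 'a measure set" where
  "MK \<nu> = {\<mu> \<in> P2. kantorovich_dom \<mu> \<nu>}"

definition is_cone :: "('a::euclidean_space) measure set \<Rightarrow> bool" where
  "is_cone D \<longleftrightarrow> (\<forall>\<mu>\<in>D. \<forall>l::real. l \<ge> 0 \<longrightarrow> distr \<mu> borel (\<lambda>x. l *\<^sub>R x) \<in> D)"

definition translation_invariant :: "('a::euclidean_space) measure set \<Rightarrow> bool" where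
  "translation_invariant D \<longleftrightarrow> (\<forall>\<mu>\<in>D. \<forall>k. distr \<mu> borel (\<lambda>x. x + k) \<in> D)"

end

theory Submission
  imports Defs
begin

(* Let \<pi> couple \<mu> with the centred \<nu>. Transporting \<pi> along x \<mapsto> l (x - a) gives a
   coupling of the affine image of \<mu> whose Kantorovich gap \<integral><x, y - x> equals
   l \<integral><x,y> d\<pi> - l^2 \<integral>|x - a|^2 d\<mu>. Choosing l to make the gap vanish puts the image
   into M^K_\<nu>; its variance is l^2 Var \<mu>, so for a variance maximiser \<mu>* whose image
   stays in D this forces l \<le> 1.
   For the first claim take a = 0 (the cone suffices) and \<pi> = \<pi>*: since \<mu>* \<preceq>_K \<nu>,
   some coupling attains \<integral>|x|^2 d\<mu>*, so l = \<integral><x,y> d\<pi>* / \<integral>|x|^2 d\<mu>* \<ge> 1.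
   For the second take a = mean \<mu>* and that coupling, so l = \<integral>|x|^2 d\<mu>* / Var \<mu>* \<ge> 1.
   Hence l = 1 in both cases. If Var \<mu>* = 0, then \<mu>* is a Dirac mass and every coupling
   has \<integral><x,y> = 0 because \<nu> is centred. *)

lemma borel_measurable_continuous_on_sets_borel:
  fixes f :: "'a::topological_space \<Rightarrow> 'b::topological_space"
  assumes "sets M = sets borel" "continuous_on UNIV f"
  shows "f \<in> borel_measurable M"
  by (simp add: measurable_cong_sets[OF assms(1) refl] borel_measurable_continuous_onI assms(2))

lemma P2D:
  assumes "\<mu> \<in> P2"
  shows "sets \<mu> = sets borel" "prob_space \<mu>" "integrable \<mu> (\<lambda>x. norm x ^ 2)"
  using assms unfolding P2_def by auto

lemma P2_integrable_id:
  assumes "\<mu> \<in> P2"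
  shows "integrable \<mu> (\<lambda>x. x)"
proof -
  interpret prob_space \<mu> using P2D(2)[OF assms] .
  have id: "(\<lambda>x. x) \<in> borel_measurable \<mu>"
    by (rule borel_measurable_continuous_on_sets_borel[OF P2D(1)[OF assms] continuous_on_id])
  have "integrable \<mu> (\<lambda>x. norm x)"
    by (rule square_integrable_imp_integrable
        [OF measurable_compose[OF id borel_measurable_norm] P2D(3)[OF assms]])
  then show ?thesis using integrable_norm_iff[OF id] by simp
qed

lemma P2_integrable_norm_diff_sq:
  assumes "\<mu> \<in> P2"
  shows "integrable \<mu> (\<lambda>x. norm (x - a) ^ 2)"
proof -
  interpret prob_space \<mu> using P2D(2)[OF assms] .
  have "norm (x - a) ^ 2 = norm x ^ 2 - 2 * inner x a + norm a ^ 2" for x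
    by (simp add: power2_norm_eq_inner inner_diff_left inner_diff_right inner_commute)
  then show ?thesis
    using P2D(3)[OF assms] P2_integrable_id[OF assms] by simp
qed

lemma couplingsD:
  assumes "\<pi> \<in> couplings \<mu> \<nu>"
  shows "sets \<pi> = sets borel" "prob_space \<pi>" "distr \<pi> borel fst = \<mu>" "distr \<pi> borel snd = \<nu>"
  using assms unfolding couplings_def by auto

lemma coupling_measurable_continuous:
  fixes f :: "'a::euclidean_space \<times> 'a \<Rightarrow> 'b::topological_space"
  assumes "\<pi> \<in> couplings \<mu> \<nu>" "continuous_on UNIV f"
  shows "f \<in> borel_measurable \<pi>"
  by (rule borel_measurable_continuous_on_sets_borel[OF couplingsD(1)[OF assms(1)] assms(2)])

lemma coupling_integral_fst:
  fixes f :: "'a::euclidean_space \<Rightarrow> 'b::euclidean_space"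
  assumes "\<pi> \<in> couplings \<mu> \<nu>" "f \<in> borel_measurable borel"
  shows "integral\<^sup>L \<pi> (\<lambda>p. f (fst p)) = integral\<^sup>L \<mu> f"
    and "integrable \<pi> (\<lambda>p. f (fst p)) \<longleftrightarrow> integrable \<mu> f"
proof -
  have "fst \<in> borel_measurable \<pi>"
    using assms(1) by (rule coupling_measurable_continuous) (intro continuous_intros)
  then show "integral\<^sup>L \<pi> (\<lambda>p. f (fst p)) = integral\<^sup>L \<mu> f"
    and "integrable \<pi> (\<lambda>p. f (fst p)) \<longleftrightarrow> integrable \<mu> f"
    using assms(2) couplingsD(3)[OF assms(1)] by (metis integral_distr, metis integrable_distr_eq)
qed

lemma coupling_integral_snd:
  fixes f :: "'a::euclidean_space \<Rightarrow> 'b::euclidean_space"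
  assumes "\<pi> \<in> couplings \<mu> \<nu>" "f \<in> borel_measurable borel"
  shows "integral\<^sup>L \<pi> (\<lambda>p. f (snd p)) = integral\<^sup>L \<nu> f"
    and "integrable \<pi> (\<lambda>p. f (snd p)) \<longleftrightarrow> integrable \<nu> f"
proof -
  have "snd \<in> borel_measurable \<pi>"
    using assms(1) by (rule coupling_measurable_continuous) (intro continuous_intros)
  then show "integral\<^sup>L \<pi> (\<lambda>p. f (snd p)) = integral\<^sup>L \<nu> f"
    and "integrable \<pi> (\<lambda>p. f (snd p)) \<longleftrightarrow> integrable \<nu> f"
    using assms(2) couplingsD(4)[OF assms(1)] by (metis integral_distr, metis integrable_distr_eq)
qed

lemma coupling_integrable_inner:
  assumes "\<pi> \<in> couplings \<mu> \<nu>" "\<mu> \<in> P2" "\<nu> \<in> P2"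
  shows "integrable \<pi> (\<lambda>p. inner (fst p) (snd p))"
proof (rule Bochner_Integration.integrable_bound)
  have sq: "(\<lambda>x::'a. norm x ^ 2) \<in> borel_measurable borel" by measurable
  show "integrable \<pi> (\<lambda>p. norm (fst p) ^ 2 + norm (snd p) ^ 2 :: real)"
    using coupling_integral_fst(2)[OF assms(1) sq] coupling_integral_snd(2)[OF assms(1) sq]
      P2D(3)[OF assms(2)] P2D(3)[OF assms(3)] by simp
  show "(\<lambda>p. inner (fst p) (snd p)) \<in> borel_measurable \<pi>"
    using assms(1) by (rule coupling_measurable_continuous) (intro continuous_intros)
  show "AE p in \<pi>. norm (inner (fst p) (snd p)) \<le> norm (norm (fst p) ^ 2 + norm (snd p) ^ 2)"
  proof (rule AE_I2)
    fix p :: "'a \<times> 'a"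
    have "norm (inner (fst p) (snd p)) \<le> norm (fst p) * norm (snd p)"
      using Cauchy_Schwarz_ineq2 by simp
    also have "\<dots> \<le> norm (fst p) ^ 2 + norm (snd p) ^ 2"
      using sum_squares_bound[of "norm (fst p)" "norm (snd p)"]
        mult_nonneg_nonneg[OF norm_ge_zero norm_ge_zero, of "fst p" "snd p"] by linarith
    finally show "norm (inner (fst p) (snd p)) \<le> norm (norm (fst p) ^ 2 + norm (snd p) ^ 2)"
      by simp
  qed
qed

lemma coupling_integral_inner_snd_centered:
  assumes "\<pi> \<in> couplings \<mu> \<nu>" "\<nu> \<in> P20"
  shows "integrable \<pi> (\<lambda>p. inner a (snd p))" "(\<integral>p. inner a (snd p) \<partial>\<pi>) = 0"
proof -
  have nu: "\<nu> \<in> P2" "mean \<nu> = 0" using assms(2) unfolding P20_def by auto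
  have f: "(\<lambda>y::'a. inner a y) \<in> borel_measurable borel" by measurable
  show "integrable \<pi> (\<lambda>p. inner a (snd p))"
    using coupling_integral_snd(2)[OF assms(1) f] P2_integrable_id[OF nu(1)] by simp
  show "(\<integral>p. inner a (snd p) \<partial>\<pi>) = 0"
    using coupling_integral_snd(1)[OF assms(1) f] P2_integrable_id[OF nu(1)] nu(2)
    by (simp add: mean_def)
qed

lemma coupling_integral_inner_affine:
  assumes "\<pi> \<in> couplings \<mu> \<nu>" "\<mu> \<in> P2" "\<nu> \<in> P20"
  shows "(\<integral>p. inner (l *\<^sub>R (fst p - a)) (snd p - l *\<^sub>R (fst p - a)) \<partial>\<pi>)
     = l * (\<integral>p. inner (fst p) (snd p) \<partial>\<pi>) - l^2 * (\<integral>x. norm (x - a) ^ 2 \<partial>\<mu>)"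
proof -
  have nu: "\<nu> \<in> P2" using assms(3) unfolding P20_def by simp
  have sq: "(\<lambda>x::'a. norm (x - a) ^ 2) \<in> borel_measurable borel" by measurable
  have int_xy: "integrable \<pi> (\<lambda>p. inner (fst p) (snd p))"
    by (rule coupling_integrable_inner[OF assms(1,2) nu])
  have int_sq: "integrable \<pi> (\<lambda>p. norm (fst p - a) ^ 2)"
    using coupling_integral_fst(2)[OF assms(1) sq] P2_integrable_norm_diff_sq[OF assms(2)] by simp
  have "inner (l *\<^sub>R (fst p - a)) (snd p - l *\<^sub>R (fst p - a))
      = l * inner (fst p) (snd p) - l * inner a (snd p) - l^2 * norm (fst p - a) ^ 2" for p
    unfolding power2_norm_eq_inner by (simp add: inner_commute power2_eq_square algebra_simps)
  then have "(\<integral>p. inner (l *\<^sub>R (fst p - a)) (snd p - l *\<^sub>R (fst p - a)) \<partial>\<pi>)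
      = l * (\<integral>p. inner (fst p) (snd p) \<partial>\<pi>) - l * (\<integral>p. inner a (snd p) \<partial>\<pi>)
        - l^2 * (\<integral>p. norm (fst p - a) ^ 2 \<partial>\<pi>)"
    using int_xy int_sq coupling_integral_inner_snd_centered(1)[OF assms(1,3), of a] by simp
  then show ?thesis
    using coupling_integral_inner_snd_centered(2)[OF assms(1,3)] coupling_integral_fst(1)[OF assms(1) sq]
    by simp
qed

lemma couplings_distr_map_fst:
  fixes \<mu> \<nu> :: "'a::euclidean_space measure"
  assumes "\<pi> \<in> couplings \<mu> \<nu>" "g \<in> borel_measurable borel"
  shows "distr \<pi> borel (\<lambda>p. (g (fst p), snd p)) \<in> couplings (distr \<mu> borel g) \<nu>"
proof -
  let ?T = "\<lambda>p::'a \<times> 'a. (g (fst p), snd p)"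
  have sets: "sets \<pi> = sets (borel \<Otimes>\<^sub>M (borel :: 'a measure))"
    using couplingsD(1)[OF assms(1)] borel_prod by metis
  have T: "?T \<in> \<pi> \<rightarrow>\<^sub>M borel"
    unfolding measurable_cong_sets[OF sets refl] borel_prod[symmetric] using assms(2)
    by measurable
  have fst: "fst \<in> \<pi> \<rightarrow>\<^sub>M borel"
    using assms(1) by (rule coupling_measurable_continuous) (intro continuous_intros)
  have fst_borel: "(fst :: 'a \<times> 'a \<Rightarrow> 'a) \<in> borel_measurable borel"
    and snd_borel: "(snd :: 'a \<times> 'a \<Rightarrow> 'a) \<in> borel_measurable borel"
    by (intro borel_measurable_continuous_onI continuous_intros)+
  have "distr (distr \<pi> borel ?T) borel fst = distr \<pi> borel (fst \<circ> ?T)"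
    by (rule distr_distr[OF fst_borel T])
  also have "fst \<circ> ?T = g \<circ> fst" by auto
  also have "distr \<pi> borel (g \<circ> fst) = distr (distr \<pi> borel fst) borel g"
    by (rule distr_distr[OF assms(2) fst, symmetric])
  also have "distr \<pi> borel fst = \<mu>" by (rule couplingsD(3)[OF assms(1)])
  finally have marginal_fst: "distr (distr \<pi> borel ?T) borel fst = distr \<mu> borel g" .
  have "distr (distr \<pi> borel ?T) borel snd = distr \<pi> borel (snd \<circ> ?T)"
    by (rule distr_distr[OF snd_borel T])
  also have "snd \<circ> ?T = snd" by auto
  also have "distr \<pi> borel snd = \<nu>" by (rule couplingsD(4)[OF assms(1)])
  finally have marginal_snd: "distr (distr \<pi> borel ?T) borel snd = \<nu>" .
  have "prob_space (distr \<pi> borel ?T)"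
    by (rule prob_space.prob_space_distr[OF couplingsD(2)[OF assms(1)] T])
  moreover have "sets (distr \<pi> borel ?T) = sets borel" by simp
  ultimately show ?thesis
    using marginal_fst marginal_snd unfolding couplings_def by (intro CollectI conjI)
qed

lemma kantorovich_dom_affine_image:
  assumes "\<pi> \<in> couplings \<mu> \<nu>" "\<mu> \<in> P2" "\<nu> \<in> P20"
    and "(\<integral>p. inner (fst p) (snd p) \<partial>\<pi>) = l * (\<integral>x. norm (x - a) ^ 2 \<partial>\<mu>)"
  shows "kantorovich_dom (distr \<mu> borel (\<lambda>x. l *\<^sub>R (x - a))) \<nu>"
proof -
  let ?g = "\<lambda>x::'a. l *\<^sub>R (x - a)"
  let ?T = "\<lambda>p::'a \<times> 'a. (?g (fst p), snd p)"
  have g: "?g \<in> borel_measurable borel" by measurable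
  have T: "?T \<in> borel_measurable \<pi>"
    using assms(1) by (rule coupling_measurable_continuous) (intro continuous_intros)
  have gap: "(\<lambda>q::'a \<times> 'a. inner (fst q - mean \<nu>) (snd q - fst q)) \<in> borel_measurable borel"
    by (intro borel_measurable_continuous_onI continuous_intros)
  have "(\<integral>q. inner (fst q - mean \<nu>) (snd q - fst q) \<partial>distr \<pi> borel ?T)
      = (\<integral>p. inner (?g (fst p)) (snd p - ?g (fst p)) \<partial>\<pi>)"
    using integral_distr[OF T gap] assms(3) by (simp add: P20_def)
  also have "\<dots> = 0"
    using coupling_integral_inner_affine[OF assms(1-3)] assms(4)
    by (simp add: power2_eq_square)
  finally show ?thesis
    unfolding kantorovich_dom_def using couplings_distr_map_fst[OF assms(1) g] by blast
qed

lemma MK_obtains_coupling: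
  assumes "\<mu> \<in> MK \<nu>" "\<nu> \<in> P20"
  obtains \<pi> where "\<pi> \<in> couplings \<mu> \<nu>" "(\<integral>p. inner (fst p) (snd p) \<partial>\<pi>) = (\<integral>x. norm x ^ 2 \<partial>\<mu>)"
proof -
  obtain \<pi> where \<pi>: "\<pi> \<in> couplings \<mu> \<nu>" "(\<integral>p. inner (fst p - mean \<nu>) (snd p - fst p) \<partial>\<pi>) = 0"
    using assms(1) unfolding MK_def kantorovich_dom_def by auto
  have "\<mu> \<in> P2" using assms(1) unfolding MK_def by simp
  then have "(\<integral>p. inner (fst p) (snd p) \<partial>\<pi>) - (\<integral>x. norm x ^ 2 \<partial>\<mu>) = 0"
    using coupling_integral_inner_affine[OF \<pi>(1) _ assms(2), of 1 0] \<pi>(2) assms(2)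
    by (simp add: P20_def)
  with \<pi>(1) show thesis by (intro that) simp_all
qed

lemma Var_eq_second_moment_minus_mean:
  assumes "\<mu> \<in> P2"
  shows "Var \<mu> = (\<integral>x. norm x ^ 2 \<partial>\<mu>) - norm (mean \<mu>) ^ 2"
proof -
  interpret prob_space \<mu> using P2D(2)[OF assms] .
  let ?m = "mean \<mu>"
  have "norm (x - ?m) ^ 2 = norm x ^ 2 - 2 * inner x ?m + norm ?m ^ 2" for x
    by (simp add: power2_norm_eq_inner inner_diff_left inner_diff_right inner_commute)
  then have "Var \<mu> = (\<integral>x. norm x ^ 2 \<partial>\<mu>) - 2 * inner ?m ?m + norm ?m ^ 2"
    using P2D(3)[OF assms] P2_integrable_id[OF assms] by (simp add: Var_def mean_def prob_space)
  then show ?thesis by (simp add: power2_norm_eq_inner)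
qed

lemma Var_affine_image:
  assumes "\<mu> \<in> P2"
  shows "Var (distr \<mu> borel (\<lambda>x. l *\<^sub>R (x - a))) = l^2 * Var \<mu>"
proof -
  interpret prob_space \<mu> using P2D(2)[OF assms] .
  let ?g = "\<lambda>x::'a. l *\<^sub>R (x - a)"
  have g: "?g \<in> borel_measurable \<mu>"
    by (rule borel_measurable_continuous_on_sets_borel[OF P2D(1)[OF assms]]) (intro continuous_intros)
  have "mean (distr \<mu> borel ?g) = (\<integral>x. ?g x \<partial>\<mu>)"
    unfolding mean_def by (rule integral_distr[OF g]) measurable
  also have "\<dots> = l *\<^sub>R ((\<integral>x. x \<partial>\<mu>) - (\<integral>x. a \<partial>\<mu>))"
    using P2_integrable_id[OF assms] by simp
  finally have mean: "mean (distr \<mu> borel ?g) = ?g (mean \<mu>)"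
    by (simp add: mean_def prob_space)
  have "Var (distr \<mu> borel ?g) = (\<integral>x. norm (?g x - ?g (mean \<mu>)) ^ 2 \<partial>\<mu>)"
    unfolding Var_def mean by (rule integral_distr[OF g]) measurable
  also have "\<dots> = (\<integral>x. l^2 * norm (x - mean \<mu>) ^ 2 \<partial>\<mu>)"
  proof (rule Bochner_Integration.integral_cong[OF refl])
    fix x
    have "?g x - ?g (mean \<mu>) = l *\<^sub>R (x - mean \<mu>)" by (simp add: algebra_simps)
    then show "norm (?g x - ?g (mean \<mu>)) ^ 2 = l^2 * norm (x - mean \<mu>) ^ 2"
      by (simp add: power_mult_distrib)
  qed
  finally show ?thesis by (simp add: Var_def)
qed

lemma coupling_integral_inner_eq_0_if_concentrated:
  assumes "\<pi> \<in> couplings \<mu> \<nu>" "\<mu> \<in> P2" "\<nu> \<in> P20" "(\<integral>x. norm (x - a) ^ 2 \<partial>\<mu>) = 0"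
  shows "(\<integral>p. inner (fst p) (snd p) \<partial>\<pi>) = 0"
proof -
  have fst: "fst \<in> \<pi> \<rightarrow>\<^sub>M borel"
    using assms(1) by (rule coupling_measurable_continuous) (intro continuous_intros)
  have "AE x in \<mu>. norm (x - a) ^ 2 = 0"
    using integral_nonneg_eq_0_iff_AE[OF P2_integrable_norm_diff_sq[OF assms(2)]] assms(4) by simp
  then have "AE p in \<pi>. fst p = a"
    unfolding couplingsD(3)[OF assms(1), symmetric] by (subst (asm) AE_distr_iff[OF fst]) auto
  moreover have "(\<lambda>p. inner (fst p) (snd p)) \<in> borel_measurable \<pi>"
    and "(\<lambda>p. inner a (snd p)) \<in> borel_measurable \<pi>"
    using assms(1) by (rule coupling_measurable_continuous, intro continuous_intros)+
  ultimately have "(\<integral>p. inner (fst p) (snd p) \<partial>\<pi>) = (\<integral>p. inner a (snd p) \<partial>\<pi>)"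
    by (intro integral_cong_AE) auto
  also have "\<dots> = 0" by (rule coupling_integral_inner_snd_centered(2)[OF assms(1,3)])
  finally show ?thesis .
qed

lemma affine_image_mem_cone_translation_invariant:
  assumes "is_cone D" "translation_invariant D" "\<mu> \<in> D" "sets \<mu> = sets borel" "0 \<le> l"
  shows "distr \<mu> borel (\<lambda>x. l *\<^sub>R (x - a)) \<in> D"
proof -
  have shift: "(\<lambda>x. x + - a) \<in> \<mu> \<rightarrow>\<^sub>M borel"
    by (rule borel_measurable_continuous_on_sets_borel[OF assms(4)]) (intro continuous_intros)
  have "distr \<mu> borel (\<lambda>x. l *\<^sub>R (x - a)) = distr (distr \<mu> borel (\<lambda>x. x + - a)) borel (\<lambda>x. l *\<^sub>R x)"
    using distr_distr[OF _ shift, of "\<lambda>x. l *\<^sub>R x" borel] by (simp add: comp_def)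
  moreover have "distr \<mu> borel (\<lambda>x. x + - a) \<in> D"
    using assms(2,3) unfolding translation_invariant_def by blast
  ultimately show ?thesis using assms(1,5) unfolding is_cone_def by simp
qed

lemma Var_maximizer_affine_image_factor_le_1:
  assumes "\<nu> \<in> P20" "D \<subseteq> P2" "\<mu>s \<in> P2" "\<forall>\<mu>\<in>D \<inter> MK \<nu>. Var \<mu> \<le> Var \<mu>s" "0 < Var \<mu>s"
    and "\<pi> \<in> couplings \<mu>s \<nu>" "distr \<mu>s borel (\<lambda>x. l *\<^sub>R (x - a)) \<in> D"
    and "(\<integral>p. inner (fst p) (snd p) \<partial>\<pi>) = l * (\<integral>x. norm (x - a) ^ 2 \<partial>\<mu>s)"
  shows "l \<le> 1"
proof -
  let ?\<mu> = "distr \<mu>s borel (\<lambda>x. l *\<^sub>R (x - a))"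
  have "?\<mu> \<in> MK \<nu>"
    using assms(2,7) kantorovich_dom_affine_image[OF assms(6,3,1,8)] unfolding MK_def by blast
  then have "Var ?\<mu> \<le> Var \<mu>s" using assms(4,7) by blast
  then have "l^2 * Var \<mu>s \<le> Var \<mu>s" by (simp only: Var_affine_image[OF assms(3)])
  then have "l^2 \<le> 1^2" using assms(5) by simp
  then show ?thesis using abs_le_square_iff[of l 1] by simp
qed

lemma optimal_coupling_integral_inner_eq_second_moment:
  assumes "\<nu> \<in> P20" "D \<subseteq> P2" "is_cone D"
    and "\<mu>s \<in> D \<inter> MK \<nu>" "\<forall>\<mu>\<in>D \<inter> MK \<nu>. Var \<mu> \<le> Var \<mu>s"
    and "\<pi>s \<in> couplings \<mu>s \<nu>"
    and "\<forall>\<pi>\<in>couplings \<mu>s \<nu>. (\<integral>p. inner (fst p) (snd p) \<partial>\<pi>) \<le> (\<integral>p. inner (fst p) (snd p) \<partial>\<pi>s)"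
  shows "(\<integral>p. inner (fst p) (snd p) \<partial>\<pi>s) = (\<integral>x. norm x ^ 2 \<partial>\<mu>s)"
proof -
  let ?C = "\<integral>p. inner (fst p) (snd p) \<partial>\<pi>s" and ?M = "\<integral>x. norm x ^ 2 \<partial>\<mu>s"
  have \<mu>s: "\<mu>s \<in> P2" using assms(2,4) by blast
  obtain \<pi> where \<pi>: "\<pi> \<in> couplings \<mu>s \<nu>" "(\<integral>p. inner (fst p) (snd p) \<partial>\<pi>) = ?M"
    using MK_obtains_coupling assms(1,4) by blast
  show ?thesis
  proof (cases "Var \<mu>s = 0")
    case True
    then have "(\<integral>x. norm (x - mean \<mu>s) ^ 2 \<partial>\<mu>s) = 0" by (simp add: Var_def)
    then show ?thesis
      using coupling_integral_inner_eq_0_if_concentrated[OF _ \<mu>s assms(1)] assms(6) \<pi> by metis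
  next
    case False
    then have "0 < Var \<mu>s" by (simp add: Var_def less_le)
    moreover have "Var \<mu>s \<le> ?M" using Var_eq_second_moment_minus_mean[OF \<mu>s] by simp
    ultimately have "0 < ?M" by linarith
    let ?l = "?C / ?M"
    have "?M \<le> ?C" using assms(7) \<pi> by metis
    with \<open>0 < ?M\<close> have "0 \<le> ?l" by simp
    then have "distr \<mu>s borel (\<lambda>x. ?l *\<^sub>R (x - 0)) \<in> D"
      using assms(3,4) unfolding is_cone_def by simp
    moreover have "?C = ?l * (\<integral>x. norm (x - 0) ^ 2 \<partial>\<mu>s)" using \<open>0 < ?M\<close> by simp
    ultimately have "?l \<le> 1"
      by (rule Var_maximizer_affine_image_factor_le_1[OF assms(1,2) \<mu>s assms(5) \<open>0 < Var \<mu>s\<close> assms(6)])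
    with \<open>0 < ?M\<close> \<open>?M \<le> ?C\<close> show ?thesis by (simp add: divide_le_eq_1)
  qed
qed

lemma Var_maximizer_mean_eq_0:
  assumes "\<nu> \<in> P20" "D \<subseteq> P2" "is_cone D" "translation_invariant D"
    and "\<mu>s \<in> D \<inter> MK \<nu>" "\<forall>\<mu>\<in>D \<inter> MK \<nu>. Var \<mu> \<le> Var \<mu>s"
  shows "mean \<mu>s = 0"
proof -
  let ?M = "\<integral>x. norm x ^ 2 \<partial>\<mu>s"
  have \<mu>s: "\<mu>s \<in> P2" using assms(2,5) by blast
  have Var: "Var \<mu>s = ?M - norm (mean \<mu>s) ^ 2" by (rule Var_eq_second_moment_minus_mean[OF \<mu>s])
  obtain \<pi> where \<pi>: "\<pi> \<in> couplings \<mu>s \<nu>" "(\<integral>p. inner (fst p) (snd p) \<partial>\<pi>) = ?M"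
    using MK_obtains_coupling assms(1,5) by blast
  have "?M \<le> Var \<mu>s"
  proof (cases "Var \<mu>s = 0")
    case True
    then have "(\<integral>x. norm (x - mean \<mu>s) ^ 2 \<partial>\<mu>s) = 0" by (simp add: Var_def)
    then show ?thesis
      using coupling_integral_inner_eq_0_if_concentrated[OF \<pi>(1) \<mu>s assms(1)] \<pi>(2) True by simp
  next
    case False
    then have "0 < Var \<mu>s" by (simp add: Var_def less_le)
    let ?l = "?M / Var \<mu>s"
    have "distr \<mu>s borel (\<lambda>x. ?l *\<^sub>R (x - mean \<mu>s)) \<in> D"
      using affine_image_mem_cone_translation_invariant[OF assms(3,4)] assms(5) P2D(1)[OF \<mu>s]
        \<open>0 < Var \<mu>s\<close> by simp
    then have "?l \<le> 1"
      using Var_maximizer_affine_image_factor_le_1[OF assms(1,2) \<mu>s assms(6) \<open>0 < Var \<mu>s\<close> \<pi>(1)]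
        \<pi>(2) \<open>0 < Var \<mu>s\<close> by (simp add: Var_def)
    with \<open>0 < Var \<mu>s\<close> show ?thesis by (simp add: divide_le_eq_1)
  qed
  then show ?thesis using Var by simp
qed

theorem mainTheorem13:
  fixes \<nu> :: "('a::euclidean_space) measure" and D :: "'a measure set"
  assumes "\<nu> \<in> P20" and "D \<subseteq> P2" and "is_cone D"
  shows "(\<forall>\<mu>s \<pi>s. (\<mu>s \<in> D \<inter> MK \<nu> \<and> (\<forall>\<mu>\<in>D \<inter> MK \<nu>. Var \<mu> \<le> Var \<mu>s))
            \<longrightarrow> (\<pi>s \<in> couplings \<mu>s \<nu> \<and>
                 (\<forall>\<pi>\<in>couplings \<mu>s \<nu>. (\<integral>p. inner (fst p) (snd p) \<partial>\<pi>) \<le> (\<integral>p. inner (fst p) (snd p) \<partial>\<pi>s)))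
            \<longrightarrow> (\<integral>p. inner (fst p) (snd p) \<partial>\<pi>s) = (\<integral>x. (norm x)^2 \<partial>\<mu>s))
       \<and> (translation_invariant D \<longrightarrow>
           (\<forall>\<mu>s. (\<mu>s \<in> D \<inter> MK \<nu> \<and> (\<forall>\<mu>\<in>D \<inter> MK \<nu>. Var \<mu> \<le> Var \<mu>s)) \<longrightarrow> mean \<mu>s = 0))"
proof (intro conjI allI impI; elim conjE)
  fix \<mu>s \<pi>s
  assume "\<mu>s \<in> D \<inter> MK \<nu>" "\<forall>\<mu>\<in>D \<inter> MK \<nu>. Var \<mu> \<le> Var \<mu>s" "\<pi>s \<in> couplings \<mu>s \<nu>"
    "\<forall>\<pi>\<in>couplings \<mu>s \<nu>. (\<integral>p. inner (fst p) (snd p) \<partial>\<pi>) \<le> (\<integral>p. inner (fst p) (snd p) \<partial>\<pi>s)"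
  then show "(\<integral>p. inner (fst p) (snd p) \<partial>\<pi>s) = (\<integral>x. (norm x)^2 \<partial>\<mu>s)"
    by (rule optimal_coupling_integral_inner_eq_second_moment[OF assms])
next
  fix \<mu>s
  assume "translation_invariant D" "\<mu>s \<in> D \<inter> MK \<nu>" "\<forall>\<mu>\<in>D \<inter> MK \<nu>. Var \<mu> \<le> Var \<mu>s"
  then show "mean \<mu>s = 0"
    by (rule Var_maximizer_mean_eq_0[OF assms])
qed

end
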